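(* Let $\mathbb{F}$ be a finite field, $G\subseteq\mathbb{F}$, $m,k\in\mathbb{N}$, and $d,d'\in\mathbb{N}$ with $d'\ge2(|G|-1)$. Let $Q\subseteq\mathbb{F}^{m+k}$ with $|Q|<|G|^k$, and let $Z$ be uniformly random in $\mathbb{F}^{\le d,\le d'}[X_1,\dots,X_m,Y_1,\dots,Y_k]$. Then the random vectors $\big(\sum_{\vec y\in G^k}Z(\vec\alpha,\vec y)\big)_{\vec\alpha\in\mathbb{F}^m}$ and $\big(Z(\vec q)\big)_{\vec q\in Q}$ are statistically independent.
   Context: $\mathbb{F}^{\le d,\le d'}[X_1,\dots,X_m,Y_1,\dots,Y_k]$ denotes the set of $(m+k)$-variate polynomials over $\mathbb{F}$ of individual degree at most $d$ in each of $X_1,\dots,X_m$ and at most $d'$ in each of $Y_1,\dots,Y_k$. *)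

theory Defs
  imports "HOL-Probability.Probability_Mass_Function"
begin

definition ideg_exps :: "nat \<Rightarrow> nat \<Rightarrow> nat \<Rightarrow> nat \<Rightarrow> (nat list \<times> nat list) set" where
  "ideg_exps m k d d' =
     {e. length e = m \<and> (\<forall>i\<in>set e. i \<le> d)} \<times> {f. length f = k \<and> (\<forall>j\<in>set f. j \<le> d')}"

text \<open>The polynomial space F^{<=d,<=d'}[X_1..X_m,Y_1..Y_k], represented by coefficient
  functions on exponent vectors supported in ideg_exps.\<close>
definition ideg_polys :: "nat \<Rightarrow> nat \<Rightarrow> nat \<Rightarrow> nat \<Rightarrow> ((nat list \<times> nat list) \<Rightarrow> 'a::zero) set" where
  "ideg_polys m k d d' = {c. \<forall>ef. ef \<notin> ideg_exps m k d d' \<longrightarrow> c ef = 0}"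

definition ideg_eval :: "nat \<Rightarrow> nat \<Rightarrow> nat \<Rightarrow> nat \<Rightarrow> ((nat list \<times> nat list) \<Rightarrow> 'a::comm_ring_1)
    \<Rightarrow> 'a list \<Rightarrow> 'a list \<Rightarrow> 'a" where
  "ideg_eval m k d d' c xs ys =
     (\<Sum>(e, f)\<in>ideg_exps m k d d'. c (e, f) * (\<Prod>i<m. xs ! i ^ (e ! i)) * (\<Prod>j<k. ys ! j ^ (f ! j)))"

definition vecs :: "nat \<Rightarrow> 'a set \<Rightarrow> 'a list set" where
  "vecs n S = {v. length v = n \<and> set v \<subseteq> S}"

end

theory Submission
  imports Defs "HOL-Library.Function_Algebras"
begin

text \<open>
  Both statistics are linear in \<open>Z\<close>, so under the uniform distribution each is uniform on
  its image, and they are independent as soon as their joint image is the product of the two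
  images. Let \<open>T\<close> be the set of \<open>Y\<close>-parts of the points of \<open>Q\<close>. As \<open>|T| < |G|^k\<close>, pigeonhole
  gives a nonzero polynomial of individual degree \<open>< |G|\<close> vanishing on \<open>T\<close>; interpolation on
  \<open>G^k\<close> shows it is nonzero at some grid point \<open>h\<close>, and multiplying by the Lagrange polynomial of
  \<open>h\<close> and normalising yields \<open>p(Y)\<close> of individual degree \<open>\<le> 2(|G| - 1)\<close> that vanishes on \<open>T\<close> and
  sums to \<open>1\<close> over \<open>G^k\<close>. The map \<open>Z \<mapsto> (\<Sum>y\<in>G^k. Z(X, y)) \<cdot> p(Y)\<close> preserves the grid sums and
  vanishes on \<open>Q\<close>, so the grid sums of one polynomial can be combined with the values on \<open>Q\<close> of
  any other.
\<close>

section \<open>Independence of linear statistics of a uniform element\<close>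

text \<open>Level sets being cosets of the kernel is all that is used of a homomorphism; it also covers
  maps such as \<open>\<lambda>x. restrict (f x) S\<close>, which are not additive.\<close>
definition fibres_are_cosets :: "'v::ab_group_add set \<Rightarrow> ('v \<Rightarrow> 'w) \<Rightarrow> bool" where
  "fibres_are_cosets V \<phi> \<longleftrightarrow> (\<forall>x\<in>V. \<forall>y\<in>V. \<phi> x = \<phi> y \<longleftrightarrow> \<phi> (x - y) = \<phi> 0)"

lemma fibres_are_cosetsD:
  "fibres_are_cosets V \<phi> \<Longrightarrow> x \<in> V \<Longrightarrow> y \<in> V \<Longrightarrow> \<phi> x = \<phi> y \<longleftrightarrow> \<phi> (x - y) = \<phi> 0"
  by (simp add: fibres_are_cosets_def)

lemma fibres_are_cosets_pair:
  assumes "fibres_are_cosets V \<phi>" "fibres_are_cosets V \<psi>"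
  shows "fibres_are_cosets V (\<lambda>x. (\<phi> x, \<psi> x))"
  using assms by (simp add: fibres_are_cosets_def)

lemma fibres_are_cosets_restrict:
  fixes f :: "'v::ab_group_add \<Rightarrow> 'i \<Rightarrow> 'b::ab_group_add"
  assumes add: "\<And>x y i. f (x + y) i = f x i + f y i"
  shows "fibres_are_cosets V (\<lambda>x. restrict (f x) S)"
proof -
  have diff: "f (x - y) i = f x i - f y i" for x y i
    using add[of "x - y" y i] by (simp add: algebra_simps)
  have "restrict (f x) S = restrict (f y) S \<longleftrightarrow> restrict (f (x - y)) S = restrict (f 0) S" for x y
    using diff[of 0 0] by (auto simp: diff fun_eq_iff restrict_def)
  then show ?thesis
    by (simp add: fibres_are_cosets_def)
qed

locale finite_additive_subgroup =
  fixes V :: "'v::ab_group_add set"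
  assumes finite: "finite V"
    and zero_mem: "0 \<in> V"
    and add_mem: "x \<in> V \<Longrightarrow> y \<in> V \<Longrightarrow> x + y \<in> V"
    and uminus_mem: "x \<in> V \<Longrightarrow> - x \<in> V"
begin

lemma diff_mem: "x \<in> V \<Longrightarrow> y \<in> V \<Longrightarrow> x - y \<in> V"
  using add_mem[OF _ uminus_mem] by simp

lemma card_fibre_eq_card_kernel:
  assumes cosets: "fibres_are_cosets V \<phi>" and "z \<in> V"
  shows "card {x\<in>V. \<phi> x = \<phi> z} = card {x\<in>V. \<phi> x = \<phi> 0}"
proof -
  let ?K = "{x\<in>V. \<phi> x = \<phi> 0}"
  have shift: "\<phi> (t + z) = \<phi> z \<longleftrightarrow> \<phi> t = \<phi> 0" if "t \<in> V" for t
    using fibres_are_cosetsD[OF cosets add_mem[OF that \<open>z \<in> V\<close>] \<open>z \<in> V\<close>] by simp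
  have image: "(\<lambda>t. t + z) ` ?K = {x\<in>V. \<phi> x = \<phi> z}"
  proof (intro equalityI subsetI)
    fix x assume "x \<in> {x\<in>V. \<phi> x = \<phi> z}"
    then have "x - z \<in> ?K"
      using diff_mem[of x z] shift[of "x - z"] \<open>z \<in> V\<close> by simp
    then show "x \<in> (\<lambda>t. t + z) ` ?K"
      by (rule rev_image_eqI) simp
  next
    fix x assume "x \<in> (\<lambda>t. t + z) ` ?K"
    then obtain t where "t \<in> ?K" "x = t + z"
      by blast
    then show "x \<in> {x\<in>V. \<phi> x = \<phi> z}"
      using add_mem[of t z] shift[of t] \<open>z \<in> V\<close> by simp
  qed
  have "inj_on (\<lambda>t. t + z) ?K"
    by (rule inj_onI) (simp only: add_right_cancel)
  from card_image[OF this] show ?thesis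
    unfolding image .
qed

lemma prob_fibre:
  assumes "fibres_are_cosets V \<phi>"
  shows "measure_pmf.prob (pmf_of_set V) {x. \<phi> x = c} = (if c \<in> \<phi> ` V then 1 / card (\<phi> ` V) else 0)"
proof -
  define K where "K = {x\<in>V. \<phi> x = \<phi> 0}"
  have fibre: "card {x\<in>V. \<phi> x = c} = card K" if "c \<in> \<phi> ` V" for c
    using that card_fibre_eq_card_kernel[OF assms] unfolding K_def by blast
  have "card V = (\<Sum>c\<in>\<phi> ` V. card {x\<in>V. \<phi> x = c})"
    using sum.image_gen[OF finite, of "\<lambda>_. 1 :: nat" \<phi>] by simp
  also have "\<dots> = (\<Sum>c\<in>\<phi> ` V. card K)"
    by (rule sum.cong[OF refl fibre])
  also have "\<dots> = card (\<phi> ` V) * card K"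
    by simp
  finally have card_V: "card V = card (\<phi> ` V) * card K" .
  have "0 \<in> K"
    using zero_mem by (simp add: K_def)
  then have "card K > 0"
    using finite by (auto simp: K_def card_gt_0_iff)
  have "V \<inter> {x. \<phi> x = c} = {x\<in>V. \<phi> x = c}"
    by blast
  then have "measure_pmf.prob (pmf_of_set V) {x. \<phi> x = c} = card {x\<in>V. \<phi> x = c} / card V"
    using measure_pmf_of_set[of V "{x. \<phi> x = c}"] zero_mem finite by auto
  also have "\<dots> = (if c \<in> \<phi> ` V then 1 / card (\<phi> ` V) else 0)"
  proof (cases "c \<in> \<phi> ` V")
    case True
    then show ?thesis
      using fibre[OF True] card_V \<open>card K > 0\<close> by simp
  next
    case False
    then have "{x\<in>V. \<phi> x = c} = {}"
      by blast
    then show ?thesis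
      unfolding \<open>{x\<in>V. \<phi> x = c} = {}\<close> using False by simp
  qed
  finally show ?thesis .
qed

lemma prob_independent:
  assumes "fibres_are_cosets V \<phi>" "fibres_are_cosets V \<psi>"
    and decouple: "\<And>x y. x \<in> V \<Longrightarrow> y \<in> V \<Longrightarrow> \<exists>z\<in>V. \<phi> z = \<phi> x \<and> \<psi> z = \<psi> y"
  shows "measure_pmf.prob (pmf_of_set V) {x. \<phi> x = a \<and> \<psi> x = b}
       = measure_pmf.prob (pmf_of_set V) {x. \<phi> x = a} * measure_pmf.prob (pmf_of_set V) {x. \<psi> x = b}"
proof -
  have "\<phi> ` V \<times> \<psi> ` V \<subseteq> (\<lambda>x. (\<phi> x, \<psi> x)) ` V"
  proof
    fix c assume "c \<in> \<phi> ` V \<times> \<psi> ` V"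
    then obtain x y where "x \<in> V" "y \<in> V" "c = (\<phi> x, \<psi> y)"
      by blast
    moreover obtain z where "z \<in> V" "\<phi> z = \<phi> x" "\<psi> z = \<psi> y"
      using decouple[OF \<open>x \<in> V\<close> \<open>y \<in> V\<close>] by blast
    ultimately have "c = (\<phi> z, \<psi> z)"
      by simp
    then show "c \<in> (\<lambda>x. (\<phi> x, \<psi> x)) ` V"
      using \<open>z \<in> V\<close> by (rule image_eqI)
  qed
  moreover have "(\<lambda>x. (\<phi> x, \<psi> x)) ` V \<subseteq> \<phi> ` V \<times> \<psi> ` V"
    by auto
  ultimately have image: "(\<lambda>x. (\<phi> x, \<psi> x)) ` V = \<phi> ` V \<times> \<psi> ` V"
    by (rule equalityI[rotated])
  have "{x. \<phi> x = a \<and> \<psi> x = b} = {x. (\<phi> x, \<psi> x) = (a, b)}"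
    by simp
  then have "measure_pmf.prob (pmf_of_set V) {x. \<phi> x = a \<and> \<psi> x = b}
      = (if (a, b) \<in> \<phi> ` V \<times> \<psi> ` V then 1 / card (\<phi> ` V \<times> \<psi> ` V) else 0)"
    using prob_fibre[OF fibres_are_cosets_pair[OF assms(1,2)], of "(a, b)"] unfolding image by simp
  then show ?thesis
    unfolding prob_fibre[OF assms(1)] prob_fibre[OF assms(2)] by (simp add: card_cartesian_product)
qed

end

section \<open>Polynomial functions of bounded individual degree\<close>

definition monom_eval :: "nat \<Rightarrow> nat list \<Rightarrow> 'a::comm_ring_1 list \<Rightarrow> 'a" where
  "monom_eval k f y = (\<Prod>j<k. y ! j ^ (f ! j))"

definition bounded_exps :: "nat \<Rightarrow> (nat \<Rightarrow> nat) \<Rightarrow> nat list set" where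
  "bounded_exps k b = {f. length f = k \<and> (\<forall>j<k. f ! j \<le> b j)}"

definition poly_fun :: "nat \<Rightarrow> (nat \<Rightarrow> nat) \<Rightarrow> ('a::comm_ring_1 list \<Rightarrow> 'a) \<Rightarrow> bool" where
  "poly_fun k b p \<longleftrightarrow> (\<exists>r. \<forall>y. p y = (\<Sum>f\<in>bounded_exps k b. r f * monom_eval k f y))"

lemma poly_funI:
  "(\<And>y. p y = (\<Sum>f\<in>bounded_exps k b. r f * monom_eval k f y)) \<Longrightarrow> poly_fun k b p"
  unfolding poly_fun_def by blast

lemma poly_funE:
  assumes "poly_fun k b p"
  obtains r where "\<And>y. p y = (\<Sum>f\<in>bounded_exps k b. r f * monom_eval k f y)"
  using assms unfolding poly_fun_def by blast

lemma bounded_exps_const: "bounded_exps k (\<lambda>_. c) = {f. set f \<subseteq> {..c} \<and> length f = k}"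
  by (auto simp: bounded_exps_def in_set_conv_nth) (use nth_mem in fastforce)

lemma finite_bounded_exps: "finite (bounded_exps k b)"
proof -
  have "bounded_exps k b \<subseteq> bounded_exps k (\<lambda>_. Max (b ` {..<k}))"
    by (auto simp: bounded_exps_def intro: order_trans[OF _ Max_ge])
  then show ?thesis
    unfolding bounded_exps_const by (rule finite_subset) (simp add: finite_lists_length_eq)
qed

lemma card_bounded_exps_const: "card (bounded_exps k (\<lambda>_. c)) = Suc c ^ k"
  unfolding bounded_exps_const by (simp add: card_lists_length_eq)

lemma poly_fun_mono:
  assumes "poly_fun k b p" "\<And>j. j < k \<Longrightarrow> b j \<le> b' j"
  shows "poly_fun k b' p"
proof -
  obtain r where r: "\<And>y. p y = (\<Sum>f\<in>bounded_exps k b. r f * monom_eval k f y)"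
    using assms(1) by (elim poly_funE) blast
  have sub: "bounded_exps k b \<subseteq> bounded_exps k b'"
    using assms(2) by (auto simp: bounded_exps_def intro: order_trans)
  define r' where "r' f = (if f \<in> bounded_exps k b then r f else 0)" for f
  have "p y = (\<Sum>f\<in>bounded_exps k b'. r' f * monom_eval k f y)" for y
    unfolding r r'_def by (rule sum.mono_neutral_cong_left[OF finite_bounded_exps sub]) auto
  then show ?thesis
    by (rule poly_funI)
qed

lemma poly_fun_const: "poly_fun k b (\<lambda>y. c)"
proof (rule poly_funI)
  fix y :: "'a list"
  let ?z = "replicate k 0"
  have "(\<Sum>f\<in>bounded_exps k b. (if f = ?z then c else 0) * monom_eval k f y)
      = (\<Sum>f\<in>bounded_exps k b. if f = ?z then c * monom_eval k f y else 0)"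
    by (rule sum.cong) auto
  also have "\<dots> = c * monom_eval k ?z y"
    by (simp add: finite_bounded_exps, simp add: bounded_exps_def)
  also have "\<dots> = c"
    by (simp add: monom_eval_def)
  finally show "c = (\<Sum>f\<in>bounded_exps k b. (if f = ?z then c else 0) * monom_eval k f y)"
    by simp
qed

lemma poly_fun_add:
  assumes "poly_fun k b p" "poly_fun k b q"
  shows "poly_fun k b (\<lambda>y. p y + q y)"
proof -
  obtain r s where "\<And>y. p y = (\<Sum>f\<in>bounded_exps k b. r f * monom_eval k f y)"
    and "\<And>y. q y = (\<Sum>f\<in>bounded_exps k b. s f * monom_eval k f y)"
    using assms by (metis poly_funE)
  then have "p y + q y = (\<Sum>f\<in>bounded_exps k b. (r f + s f) * monom_eval k f y)" for y
    by (simp add: distrib_right sum.distrib)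
  then show ?thesis
    by (rule poly_funI)
qed

lemma poly_fun_smult:
  assumes "poly_fun k b p"
  shows "poly_fun k b (\<lambda>y. c * p y)"
proof -
  obtain r where "\<And>y. p y = (\<Sum>f\<in>bounded_exps k b. r f * monom_eval k f y)"
    using assms by (elim poly_funE) blast
  then have "c * p y = (\<Sum>f\<in>bounded_exps k b. (c * r f) * monom_eval k f y)" for y
    by (simp add: sum_distrib_left mult.assoc)
  then show ?thesis
    by (rule poly_funI)
qed

lemma poly_fun_sum:
  assumes "\<And>h. h \<in> H \<Longrightarrow> poly_fun k b (g h)"
  shows "poly_fun k b (\<lambda>y. \<Sum>h\<in>H. g h y)"
proof (cases "finite H")
  case True
  then show ?thesis
    using assms
  proof (induction H rule: finite_induct)
    case empty
    then show ?case
      using poly_fun_const[of k b 0] by simp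
  next
    case (insert h H)
    then show ?case
      using poly_fun_add[of k b "g h"] by simp
  qed
qed (simp add: poly_fun_const)

lemma monom_eval_Suc:
  assumes "length f = k" "j < k"
  shows "monom_eval k (f[j := Suc (f ! j)]) y = y ! j * monom_eval k f y"
proof -
  have "monom_eval k (f[j := Suc (f ! j)]) y = (\<Prod>i<k. y ! i ^ (f ! i) * (if i = j then y ! i else 1))"
    unfolding monom_eval_def using assms by (intro prod.cong) (auto simp: nth_list_update)
  then show ?thesis
    using assms by (simp add: prod.distrib monom_eval_def mult.commute)
qed

lemma poly_fun_mult_var:
  assumes "poly_fun k b p" "j < k"
  shows "poly_fun k (b(j := Suc (b j))) (\<lambda>y. y ! j * p y)"
proof -
  obtain r where r: "\<And>y. p y = (\<Sum>f\<in>bounded_exps k b. r f * monom_eval k f y)"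
    using assms(1) by (elim poly_funE) blast
  define raise where "raise f = f[j := Suc (f ! j)]" for f :: "nat list"
  define lower where "lower f = f[j := f ! j - 1]" for f :: "nat list"
  have lower_raise: "lower (raise f) = f" if "length f = k" for f
    using that assms(2) by (simp add: raise_def lower_def)
  have inj: "inj_on raise (bounded_exps k b)"
    by (rule inj_on_inverseI[where g = lower]) (auto simp: lower_raise bounded_exps_def)
  have img: "raise ` bounded_exps k b \<subseteq> bounded_exps k (b(j := Suc (b j)))"
    using assms(2) by (auto simp: raise_def bounded_exps_def nth_list_update)
  define r' where "r' f = (if f \<in> raise ` bounded_exps k b then r (lower f) else 0)" for f
  have "y ! j * p y = (\<Sum>f\<in>bounded_exps k (b(j := Suc (b j))). r' f * monom_eval k f y)" for y
  proof -
    have "(\<Sum>f\<in>bounded_exps k (b(j := Suc (b j))). r' f * monom_eval k f y)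
        = (\<Sum>f\<in>raise ` bounded_exps k b. r' f * monom_eval k f y)"
      by (rule sum.mono_neutral_right[OF finite_bounded_exps img]) (auto simp: r'_def)
    also have "\<dots> = (\<Sum>f\<in>bounded_exps k b. r' (raise f) * monom_eval k (raise f) y)"
      by (rule sum.reindex[OF inj, unfolded comp_def])
    also have "\<dots> = (\<Sum>f\<in>bounded_exps k b. y ! j * (r f * monom_eval k f y))"
      using assms(2)
      by (intro sum.cong) (auto simp: r'_def lower_raise[unfolded raise_def] bounded_exps_def raise_def monom_eval_Suc)
    finally show ?thesis
      by (simp add: r sum_distrib_left)
  qed
  then show ?thesis
    by (rule poly_funI)
qed

lemma poly_fun_mult_prod_diff:
  assumes "finite H" "poly_fun k b p" "j < k"
  shows "poly_fun k (b(j := b j + card H)) (\<lambda>y. (\<Prod>g\<in>H. y ! j - g) * p y)"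
  using assms(1)
proof (induction H rule: finite_induct)
  case empty
  then show ?case
    using assms(2) by simp
next
  case (insert g H)
  let ?b = "b(j := b j + card H)"
  have step: "poly_fun k (?b(j := Suc (?b j))) (\<lambda>y. y ! j * ((\<Prod>g\<in>H. y ! j - g) * p y)
      + (- g) * ((\<Prod>g\<in>H. y ! j - g) * p y))"
    using insert.IH assms(3)
    by (intro poly_fun_add poly_fun_mult_var poly_fun_smult poly_fun_mono[OF insert.IH]) auto
  have bound: "?b(j := Suc (?b j)) = b(j := b j + card (insert g H))"
    using insert.hyps by simp
  have factor: "(\<lambda>y. y ! j * ((\<Prod>g\<in>H. y ! j - g) * p y) + (- g) * ((\<Prod>g\<in>H. y ! j - g) * p y))
      = (\<lambda>y. (\<Prod>g\<in>insert g H. y ! j - g) * p y)"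
    using insert.hyps by (simp add: algebra_simps)
  show ?case
    using step unfolding bound factor .
qed

section \<open>Lagrange interpolation on the grid \<open>G^k\<close>\<close>

lemma card_vecs: "finite G \<Longrightarrow> card (vecs k G) = card G ^ k"
  unfolding vecs_def using card_lists_length_eq[of G k] by (simp add: conj_commute)

lemma finite_vecs: "finite G \<Longrightarrow> finite (vecs k G)"
  unfolding vecs_def using finite_lists_length_eq[of G k] by (simp add: conj_commute)

definition lagrange_basis :: "'a::comm_ring_1 set \<Rightarrow> 'a list \<Rightarrow> nat \<Rightarrow> 'a list \<Rightarrow> 'a" where
  "lagrange_basis G h n y = (\<Prod>j<n. \<Prod>g\<in>G - {h ! j}. y ! j - g)"

lemma poly_fun_mult_lagrange_basis:
  assumes "finite G" "h \<in> vecs k G" "n \<le> k" "poly_fun k b p"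
  shows "poly_fun k (\<lambda>j. b j + (if j < n then card G - 1 else 0)) (\<lambda>y. lagrange_basis G h n y * p y)"
  using assms(3)
proof (induction n)
  case 0
  then show ?case
    using assms(4) by (simp add: lagrange_basis_def)
next
  case (Suc n)
  let ?b = "\<lambda>j. b j + (if j < n then card G - 1 else 0)"
  have "h ! n \<in> G"
    using assms(2) Suc.prems by (auto simp: vecs_def)
  then have "card (G - {h ! n}) = card G - 1"
    using assms(1) by simp
  then have bound: "?b(n := ?b n + card (G - {h ! n})) = (\<lambda>j. b j + (if j < Suc n then card G - 1 else 0))"
    by (auto simp: fun_eq_iff)
  have factor: "(\<lambda>y. (\<Prod>g\<in>G - {h ! n}. y ! n - g) * (lagrange_basis G h n y * p y))
      = (\<lambda>y. lagrange_basis G h (Suc n) y * p y)"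
    by (simp add: lagrange_basis_def fun_eq_iff ac_simps)
  show ?case
    using poly_fun_mult_prod_diff[OF _ Suc.IH, of "G - {h ! n}" n] Suc.prems assms(1)
    unfolding bound factor by simp
qed

lemma lagrange_basis_eq_0:
  fixes G :: "'a::idom set"
  assumes "finite G" "h \<in> vecs k G" "y \<in> vecs k G" "y \<noteq> h"
  shows "lagrange_basis G h k y = 0"
proof -
  obtain j where j: "j < k" "y ! j \<noteq> h ! j"
    using assms(2-4) nth_equalityI[of y h] by (auto simp: vecs_def)
  then have "y ! j \<in> G - {h ! j}"
    using assms(3) by (auto simp: vecs_def)
  then have "(\<Prod>g\<in>G - {h ! j}. y ! j - g) = 0"
    using assms(1) by (intro prod_zero) auto
  then show ?thesis
    using j(1) unfolding lagrange_basis_def by (intro prod_zero) auto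
qed

lemma lagrange_basis_self_nonzero:
  fixes G :: "'a::idom set"
  assumes "finite G"
  shows "lagrange_basis G h n h \<noteq> 0"
  using assms by (auto simp: lagrange_basis_def prod_zero_iff)

lemma poly_fun_interpolation:
  fixes G :: "'a::field set"
  assumes "finite G"
  shows "\<exists>p. poly_fun k (\<lambda>_. card G - 1) p \<and> (\<forall>y\<in>vecs k G. p y = \<phi> y)"
proof -
  define P where "P y = (\<Sum>h\<in>vecs k G. \<phi> h / lagrange_basis G h k h * (lagrange_basis G h k y * 1))" for y
  have "poly_fun k (\<lambda>j. 0 + (if j < k then card G - 1 else 0)) P"
    unfolding P_def
  proof (rule poly_fun_sum)
    fix h assume "h \<in> vecs k G"
    show "poly_fun k (\<lambda>j. 0 + (if j < k then card G - 1 else 0))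
        (\<lambda>y. \<phi> h / lagrange_basis G h k h * (lagrange_basis G h k y * 1))"
      by (rule poly_fun_smult poly_fun_mult_lagrange_basis assms \<open>h \<in> vecs k G\<close> order_refl poly_fun_const)+
  qed
  then have "poly_fun k (\<lambda>_. card G - 1) P"
    by (rule poly_fun_mono) simp
  moreover have "P y = \<phi> y" if "y \<in> vecs k G" for y
  proof -
    have "P y = (\<Sum>h\<in>vecs k G. if h = y then \<phi> y else 0)"
      unfolding P_def using that assms
      by (intro sum.cong) (auto simp: lagrange_basis_eq_0 lagrange_basis_self_nonzero)
    then show ?thesis
      using that assms by (simp add: finite_vecs)
  qed
  ultimately show ?thesis
    by blast
qed

section \<open>A polynomial vanishing on few points with grid sum one\<close>

lemma underdetermined_system_has_nonzero_solution:
  fixes g :: "'e \<Rightarrow> 't \<Rightarrow> 'a::{finite, field}"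
  assumes "finite E" "finite T" "card T < card E"
  shows "\<exists>r. (\<exists>f\<in>E. r f \<noteq> 0) \<and> (\<forall>t\<in>T. (\<Sum>f\<in>E. r f * g f t) = 0)"
proof -
  define C where "C = (\<Pi>\<^sub>E f\<in>E. (UNIV :: 'a set))"
  define \<Phi> where "\<Phi> r = (\<lambda>t\<in>T. \<Sum>f\<in>E. r f * g f t)" for r
  have "1 < CARD('a)"
    using card_mono[of UNIV "{0::'a, 1}"] by simp
  then have "card (\<Pi>\<^sub>E t\<in>T. (UNIV :: 'a set)) < card C"
    using assms by (simp add: C_def card_PiE power_strict_increasing)
  moreover have "\<Phi> ` C \<subseteq> (\<Pi>\<^sub>E t\<in>T. UNIV)"
    by (auto simp: \<Phi>_def)
  moreover have "finite (\<Pi>\<^sub>E t\<in>T. (UNIV :: 'a set))"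
    using assms(2) by (simp add: finite_PiE)
  ultimately have "\<not> inj_on \<Phi> C"
    by (meson card_inj_on_le leD)
  then obtain r1 r2 where r12: "r1 \<in> C" "r2 \<in> C" "r1 \<noteq> r2" "\<Phi> r1 = \<Phi> r2"
    unfolding inj_on_def by blast
  have "\<exists>f\<in>E. r1 f \<noteq> r2 f"
    using PiE_ext[OF r12(1,2)[unfolded C_def]] r12(3) by blast
  then have "\<exists>f\<in>E. r1 f - r2 f \<noteq> 0"
    by simp
  moreover have "(\<Sum>f\<in>E. (r1 f - r2 f) * g f t) = 0" if "t \<in> T" for t
    using fun_cong[OF r12(4), of t] that by (simp add: \<Phi>_def left_diff_distrib sum_subtractf)
  ultimately show ?thesis
    by (intro exI[of _ "\<lambda>f. r1 f - r2 f"]) blast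
qed

lemma card_bounded_exps_eq_card_vecs:
  assumes "finite G" "vecs k G \<noteq> {}"
  shows "card (bounded_exps k (\<lambda>_. card G - 1)) = card (vecs k G)"
proof (cases "G = {}")
  case True
  then have "k = 0"
    using assms(2) by (auto simp: vecs_def)
  then show ?thesis
    by (simp add: card_bounded_exps_const card_vecs assms(1))
next
  case False
  then show ?thesis
    using assms(1) by (simp add: card_bounded_exps_const card_vecs card_gt_0_iff Suc_diff_1)
qed

text \<open>Interpolation maps the \<open>|F|^(|G|^k)\<close> coefficient vectors onto the equally many functions on
  the grid, hence injectively.\<close>

lemma coeffs_eq_0_if_vanishes_on_grid:
  fixes G :: "'a::{finite, field} set"
  assumes "vecs k G \<noteq> {}"
    and vanish: "\<And>y. y \<in> vecs k G \<Longrightarrow> (\<Sum>f\<in>bounded_exps k (\<lambda>_. card G - 1). r f * monom_eval k f y) = 0"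
    and "f \<in> bounded_exps k (\<lambda>_. card G - 1)"
  shows "r f = 0"
proof -
  let ?E = "bounded_exps k (\<lambda>_. card G - 1)"
  define C where "C = (\<Pi>\<^sub>E f\<in>?E. (UNIV :: 'a set))"
  define \<Psi> where "\<Psi> r = (\<lambda>y\<in>vecs k G. \<Sum>f\<in>?E. r f * monom_eval k f y)" for r
  have "\<Psi> ` C = (\<Pi>\<^sub>E y\<in>vecs k G. UNIV)"
  proof (intro equalityI subsetI)
    fix \<phi> :: "'a list \<Rightarrow> 'a"
    assume \<phi>: "\<phi> \<in> (\<Pi>\<^sub>E y\<in>vecs k G. UNIV)"
    obtain p where p: "poly_fun k (\<lambda>_. card G - 1) p" "\<forall>y\<in>vecs k G. p y = \<phi> y"
      using poly_fun_interpolation[of G k \<phi>, OF finite_class.finite] by blast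
    obtain s where s: "\<And>y. p y = (\<Sum>f\<in>?E. s f * monom_eval k f y)"
      using p(1) by (elim poly_funE) blast
    have "\<Psi> (restrict s ?E) = restrict p (vecs k G)"
      unfolding \<Psi>_def s by (intro restrict_ext sum.cong) simp_all
    also have "\<dots> = restrict \<phi> (vecs k G)"
      using p(2) by (intro restrict_ext) simp
    also have "\<dots> = \<phi>"
      using \<phi> by (rule PiE_restrict)
    finally have "\<phi> = \<Psi> (restrict s ?E)"
      by (rule sym)
    moreover have "restrict s ?E \<in> C"
      by (simp add: C_def)
    ultimately show "\<phi> \<in> \<Psi> ` C"
      by (rule image_eqI)
  qed (auto simp: \<Psi>_def)
  moreover have "card (\<Pi>\<^sub>E y\<in>vecs k G. (UNIV :: 'a set)) = card C"
    using card_bounded_exps_eq_card_vecs[OF finite_class.finite assms(1)]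
    by (simp add: C_def card_PiE finite_bounded_exps finite_vecs)
  ultimately have inj: "inj_on \<Psi> C"
    by (intro eq_card_imp_inj_on) (simp_all add: C_def finite_bounded_exps finite_PiE)
  have "\<Psi> (restrict r ?E) = \<Psi> (\<lambda>_\<in>?E. 0)"
    unfolding \<Psi>_def using vanish by (intro restrict_ext) simp
  then have "restrict r ?E = (\<lambda>_\<in>?E. 0)"
    by (rule inj_onD[OF inj]) (simp_all add: C_def)
  then have "restrict r ?E f = (\<lambda>_\<in>?E. 0) f"
    by (rule fun_cong)
  then show ?thesis
    using assms(3) by simp
qed

lemma exists_poly_fun_vanishing_sum_one:
  fixes G :: "'a::{finite, field} set"
  assumes "finite T" "card T < card G ^ k"
  shows "\<exists>p. poly_fun k (\<lambda>_. 2 * (card G - 1)) p \<and> (\<forall>t\<in>T. p t = 0) \<and> (\<Sum>y\<in>vecs k G. p y) = 1"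
proof -
  let ?E = "bounded_exps k (\<lambda>_. card G - 1)"
  have card_grid: "card (vecs k G) = card G ^ k"
    by (rule card_vecs[OF finite_class.finite])
  then have "card (vecs k G) > 0"
    using assms(2) by linarith
  then have grid: "vecs k G \<noteq> {}"
    by auto
  have "card T < card ?E"
    using assms(2) card_grid card_bounded_exps_eq_card_vecs[OF finite_class.finite grid] by simp
  then obtain r where r: "\<exists>f\<in>?E. r f \<noteq> 0" "\<forall>t\<in>T. (\<Sum>f\<in>?E. r f * monom_eval k f t) = 0"
    using underdetermined_system_has_nonzero_solution[OF finite_bounded_exps assms(1), of _ _ "monom_eval k"] by blast
  define q where "q y = (\<Sum>f\<in>?E. r f * monom_eval k f y)" for y
  have "\<exists>h\<in>vecs k G. q h \<noteq> 0"
  proof (rule ccontr)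
    assume "\<not> (\<exists>h\<in>vecs k G. q h \<noteq> 0)"
    then have "r f = 0" if "f \<in> ?E" for f
      using coeffs_eq_0_if_vanishes_on_grid[OF grid _ that] unfolding q_def by blast
    with r(1) show False
      by blast
  qed
  then obtain h where h: "h \<in> vecs k G" "q h \<noteq> 0"
    by blast
  define P where "P y = lagrange_basis G h k y * q y" for y
  have "poly_fun k (\<lambda>_. card G - 1) q"
    by (rule poly_funI[where r = r]) (simp add: q_def)
  then have "poly_fun k (\<lambda>j. (card G - 1) + (if j < k then card G - 1 else 0)) P"
    unfolding P_def by (rule poly_fun_mult_lagrange_basis[OF finite_class.finite h(1) order_refl])
  then have "poly_fun k (\<lambda>_. 2 * (card G - 1)) (\<lambda>y. inverse (P h) * P y)"
    by (intro poly_fun_smult) (rule poly_fun_mono, auto)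
  moreover have "(\<Sum>y\<in>vecs k G. P y) = P h"
  proof -
    have "(\<Sum>y\<in>vecs k G. P y) = (\<Sum>y\<in>vecs k G. if y = h then P h else 0)"
      using h(1) by (intro sum.cong) (auto simp: P_def lagrange_basis_eq_0)
    then show ?thesis
      using h(1) by (simp add: finite_vecs)
  qed
  moreover have "P h \<noteq> 0"
    using h(2) by (simp add: P_def lagrange_basis_self_nonzero)
  moreover have "P t = 0" if "t \<in> T" for t
    using r(2) that by (simp add: P_def q_def)
  ultimately show ?thesis
    by (intro exI[of _ "\<lambda>y. inverse (P h) * P y"]) (simp add: sum_distrib_left[symmetric])
qed

lemma ideg_exps_eq: "ideg_exps m k d d' = bounded_exps m (\<lambda>_. d) \<times> bounded_exps k (\<lambda>_. d')"
  unfolding ideg_exps_def bounded_exps_const by auto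

lemma ideg_eval_monom_eval:
  "ideg_eval m k d d' Z x y
     = (\<Sum>e\<in>bounded_exps m (\<lambda>_. d). \<Sum>f\<in>bounded_exps k (\<lambda>_. d'). Z (e, f) * monom_eval m e x * monom_eval k f y)"
  unfolding ideg_eval_def ideg_exps_eq monom_eval_def by (simp add: sum.cartesian_product)

lemma ideg_eval_add:
  "ideg_eval m k d d' (Z + W) x y = ideg_eval m k d d' Z x y + ideg_eval m k d d' W x y"
  by (simp add: ideg_eval_def case_prod_unfold distrib_right sum.distrib)

lemma ideg_eval_diff:
  "ideg_eval m k d d' (Z - W) x y = ideg_eval m k d d' Z x y - ideg_eval m k d d' W x y"
  by (simp add: ideg_eval_def case_prod_unfold left_diff_distrib sum_subtractf)

lemma finite_additive_subgroup_ideg_polys: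
  "finite_additive_subgroup (ideg_polys m k d d' :: (nat list \<times> nat list \<Rightarrow> 'a::{finite, ab_group_add}) set)"
proof
  have "ideg_polys m k d d' = {c :: _ \<Rightarrow> 'a. \<forall>ef. (ef \<in> ideg_exps m k d d' \<longrightarrow> c ef \<in> UNIV) \<and> (ef \<notin> ideg_exps m k d d' \<longrightarrow> c ef = 0)}"
    by (simp add: ideg_polys_def)
  then show "finite (ideg_polys m k d d' :: (_ \<Rightarrow> 'a) set)"
    by (simp only:) (rule finite_set_of_finite_funs, simp_all add: ideg_exps_eq finite_bounded_exps)
qed (simp_all add: ideg_polys_def)

lemma poly_fun_ideg_eval:
  "poly_fun m (\<lambda>_. d) (\<lambda>x. ideg_eval m k d d' Z x y)"
proof (rule poly_funI)
  fix x
  show "ideg_eval m k d d' Z x y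
      = (\<Sum>e\<in>bounded_exps m (\<lambda>_. d). (\<Sum>f\<in>bounded_exps k (\<lambda>_. d'). Z (e, f) * monom_eval k f y) * monom_eval m e x)"
    unfolding ideg_eval_monom_eval by (simp add: sum_distrib_left sum_distrib_right ac_simps)
qed

lemma ideg_polys_tensor:
  assumes "poly_fun m (\<lambda>_. d) A" "poly_fun k (\<lambda>_. d') B"
  shows "\<exists>W\<in>ideg_polys m k d d'. \<forall>x y. ideg_eval m k d d' W x y = A x * B y"
proof -
  obtain s where s: "\<And>x. A x = (\<Sum>e\<in>bounded_exps m (\<lambda>_. d). s e * monom_eval m e x)"
    using assms(1) by (elim poly_funE) blast
  obtain r where r: "\<And>y. B y = (\<Sum>f\<in>bounded_exps k (\<lambda>_. d'). r f * monom_eval k f y)"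
    using assms(2) by (elim poly_funE) blast
  define W where "W = (\<lambda>(e, f). if (e, f) \<in> ideg_exps m k d d' then s e * r f else 0)"
  have "W \<in> ideg_polys m k d d'"
    by (auto simp: W_def ideg_polys_def)
  moreover have "ideg_eval m k d d' W x y = A x * B y" for x y
    unfolding ideg_eval_monom_eval s r sum_product
    by (intro sum.cong refl) (simp add: W_def ideg_exps_eq ac_simps)
  ultimately show ?thesis
    by blast
qed

text \<open>The witness is \<open>\<pi> Z1 + (Z2 - \<pi> Z2)\<close> with \<open>\<pi> Z = (\<Sum>y\<in>Y. Z(X, y)) \<cdot> p(Y)\<close>.\<close>

lemma ideg_polys_decouple:
  fixes Z1 Z2 :: "nat list \<times> nat list \<Rightarrow> 'a::{finite, field}"
  assumes "poly_fun k (\<lambda>_. d') p" "(\<Sum>y\<in>Y. p y) = 1" "Z2 \<in> ideg_polys m k d d'"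
  shows "\<exists>Z\<in>ideg_polys m k d d'.
           (\<forall>x. (\<Sum>y\<in>Y. ideg_eval m k d d' Z x y) = (\<Sum>y\<in>Y. ideg_eval m k d d' Z1 x y))
         \<and> (\<forall>x y. p y = 0 \<longrightarrow> ideg_eval m k d d' Z x y = ideg_eval m k d d' Z2 x y)"
proof -
  interpret V: finite_additive_subgroup "ideg_polys m k d d' :: (_ \<Rightarrow> 'a) set"
    by (rule finite_additive_subgroup_ideg_polys)
  have "\<exists>W\<in>ideg_polys m k d d'. \<forall>x y. ideg_eval m k d d' W x y = (\<Sum>y'\<in>Y. ideg_eval m k d d' Z x y') * p y"
    for Z :: "_ \<Rightarrow> 'a"
    by (intro ideg_polys_tensor poly_fun_sum poly_fun_ideg_eval assms(1))
  then obtain W1 W2 where W1: "W1 \<in> ideg_polys m k d d'"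
      "\<And>x y. ideg_eval m k d d' W1 x y = (\<Sum>y'\<in>Y. ideg_eval m k d d' Z1 x y') * p y"
    and W2: "W2 \<in> ideg_polys m k d d'"
      "\<And>x y. ideg_eval m k d d' W2 x y = (\<Sum>y'\<in>Y. ideg_eval m k d d' Z2 x y') * p y"
    by meson
  have eval: "ideg_eval m k d d' (W1 + (Z2 - W2)) x y
      = ideg_eval m k d d' W1 x y + ideg_eval m k d d' Z2 x y - ideg_eval m k d d' W2 x y" for x y
    by (simp add: ideg_eval_add ideg_eval_diff)
  show ?thesis
  proof (intro bexI conjI allI impI)
    show "W1 + (Z2 - W2) \<in> ideg_polys m k d d'"
      using W1(1) W2(1) assms(3) by (intro V.add_mem V.diff_mem)
    show "(\<Sum>y\<in>Y. ideg_eval m k d d' (W1 + (Z2 - W2)) x y) = (\<Sum>y\<in>Y. ideg_eval m k d d' Z1 x y)" for x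
      unfolding eval W1(2) W2(2)
      by (simp add: sum.distrib sum_subtractf sum_distrib_left[symmetric] assms(2))
    show "ideg_eval m k d d' (W1 + (Z2 - W2)) x y = ideg_eval m k d d' Z2 x y" if "p y = 0" for x y
      unfolding eval W1(2) W2(2) using that by simp
  qed
qed

theorem corollary8p3:
  fixes G :: "'a::{finite, field} set"
    and m k d d' :: nat
    and Q :: "'a list set"
  assumes "d' \<ge> 2 * (card G - 1)"
    and "Q \<subseteq> vecs (m + k) UNIV"
    and "card Q < card G ^ k"
  shows "\<forall>a b. measure_pmf.prob (pmf_of_set (ideg_polys m k d d'))
          {Z. (\<lambda>\<alpha>\<in>vecs m UNIV. \<Sum>y\<in>vecs k G. ideg_eval m k d d' Z \<alpha> y) = a
              \<and> (\<lambda>q\<in>Q. ideg_eval m k d d' Z (take m q) (drop m q)) = b}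
        = measure_pmf.prob (pmf_of_set (ideg_polys m k d d'))
            {Z. (\<lambda>\<alpha>\<in>vecs m UNIV. \<Sum>y\<in>vecs k G. ideg_eval m k d d' Z \<alpha> y) = a}
        * measure_pmf.prob (pmf_of_set (ideg_polys m k d d'))
            {Z. (\<lambda>q\<in>Q. ideg_eval m k d d' Z (take m q) (drop m q)) = b}"
proof -
  interpret V: finite_additive_subgroup "ideg_polys m k d d' :: (_ \<Rightarrow> 'a) set"
    by (rule finite_additive_subgroup_ideg_polys)
  let ?sum_over_grid = "\<lambda>Z. \<lambda>\<alpha>\<in>vecs m UNIV. \<Sum>y\<in>vecs k G. ideg_eval m k d d' Z \<alpha> y"
  let ?values_on_Q = "\<lambda>Z. \<lambda>q\<in>Q. ideg_eval m k d d' Z (take m q) (drop m q)"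
  have "finite Q"
    using assms(2) finite_vecs[OF finite_class.finite] by (rule finite_subset)
  then have "card (drop m ` Q) < card G ^ k"
    using card_image_le[of Q "drop m"] assms(3) by linarith
  then obtain p where p: "poly_fun k (\<lambda>_. 2 * (card G - 1)) p" "\<forall>t\<in>drop m ` Q. p t = 0"
      "(\<Sum>y\<in>vecs k G. p y) = 1"
    using exists_poly_fun_vanishing_sum_one \<open>finite Q\<close> by blast
  have p_deg: "poly_fun k (\<lambda>_. d') p"
    using p(1) assms(1) by (rule poly_fun_mono)
  have cosets_grid: "fibres_are_cosets (ideg_polys m k d d') ?sum_over_grid"
    by (rule fibres_are_cosets_restrict) (simp add: ideg_eval_add sum.distrib)
  have cosets_Q: "fibres_are_cosets (ideg_polys m k d d') ?values_on_Q"
    by (rule fibres_are_cosets_restrict) (simp add: ideg_eval_add)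
  have decouple: "\<exists>Z\<in>ideg_polys m k d d'. ?sum_over_grid Z = ?sum_over_grid Z1 \<and> ?values_on_Q Z = ?values_on_Q Z2"
    if "Z1 \<in> ideg_polys m k d d'" and Z2: "Z2 \<in> ideg_polys m k d d'" for Z1 Z2
  proof -
    obtain Z where "Z \<in> ideg_polys m k d d'"
        "\<And>x. (\<Sum>y\<in>vecs k G. ideg_eval m k d d' Z x y) = (\<Sum>y\<in>vecs k G. ideg_eval m k d d' Z1 x y)"
        "\<And>x y. p y = 0 \<Longrightarrow> ideg_eval m k d d' Z x y = ideg_eval m k d d' Z2 x y"
      using ideg_polys_decouple[OF p_deg p(3) Z2] by blast
    then show ?thesis
      using p(2) by (intro bexI[of _ Z] conjI restrict_ext) auto
  qed
  show ?thesis
    using V.prob_independent[OF cosets_grid cosets_Q decouple] by blast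
qed

end
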